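(* Let $D_\infty=\mathbb{Z}\rtimes\mathbb{Z}/2\mathbb{Z}=\langle s,t\mid t^2,\ tsts\rangle$ be the infinite dihedral group, and let $\alpha$ and $\beta$ be two minimal continuous actions of $D_\infty$ on an infinite compact Hausdorff space $X$. If $\alpha$ and $\beta$ are continuously orbit equivalent, then they are conjugate.
   Context: Continuous orbit equivalence: two continuous actions $G\curvearrowright X$ and $K\curvearrowright Y$ on compact Hausdorff spaces are continuously orbit equivalent if there is a homeomorphism $\phi:X\to Y$ with inverse $\psi$ and continuous maps $a:G\times X\to K$, $b:K\times Y\to G$ such that $\phi(gx)=a(g,x)\phi(x)$ and $\psi(hy)=b(h,y)\psi(y)$ for all $g\in G$, $h\in K$, $x\in X$, $y\in Y$. Two actions $\alpha,\beta$ of the same group $G$ on $X$ are conjugate if there are a homeomorphism $\phi:X\to X$ and a group automorphism $\tau$ of $G$ with $\phi(\alpha_g x)=\beta_{\tau(g)}(\phi(x))$ for all $g\in G$, $x\in X$. *)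

theory Defs
  imports "HOL-Analysis.Analysis" "HOL-Algebra.Group"
begin

text \<open>The infinite dihedral group as the semidirect product Z x| Z/2Z:
  the pair (n, e) stands for s^n t^e (e = True meaning t^1).
  Then s = (1, False), t = (0, True), and t s^m = s^(-m) t.\<close>

definition dinf_mult :: "int \<times> bool \<Rightarrow> int \<times> bool \<Rightarrow> int \<times> bool" where
  "dinf_mult x y = (if snd x then fst x - fst y else fst x + fst y, snd x \<noteq> snd y)"

definition Dinf :: "(int \<times> bool) monoid" where
  "Dinf = \<lparr>carrier = UNIV, mult = dinf_mult, one = (0, False)\<rparr>"

definition cont_action :: "('g, 'm) monoid_scheme \<Rightarrow> 'a topology \<Rightarrow> ('g \<Rightarrow> 'a \<Rightarrow> 'a) \<Rightarrow> bool" where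
  "cont_action G X \<alpha> \<longleftrightarrow>
     (\<forall>g\<in>carrier G. continuous_map X X (\<alpha> g)) \<and>
     (\<forall>x\<in>topspace X. \<alpha> \<one>\<^bsub>G\<^esub> x = x) \<and>
     (\<forall>g\<in>carrier G. \<forall>h\<in>carrier G. \<forall>x\<in>topspace X. \<alpha> (g \<otimes>\<^bsub>G\<^esub> h) x = \<alpha> g (\<alpha> h x))"

definition minimal_action :: "('g, 'm) monoid_scheme \<Rightarrow> 'a topology \<Rightarrow> ('g \<Rightarrow> 'a \<Rightarrow> 'a) \<Rightarrow> bool" where
  "minimal_action G X \<alpha> \<longleftrightarrow>
     (\<forall>x\<in>topspace X. X closure_of {\<alpha> g x | g. g \<in> carrier G} = topspace X)"

definition cont_orbit_equiv ::
  "('g, 'm) monoid_scheme \<Rightarrow> 'a topology \<Rightarrow> ('g \<Rightarrow> 'a \<Rightarrow> 'a) \<Rightarrow>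
   ('k, 'n) monoid_scheme \<Rightarrow> 'b topology \<Rightarrow> ('k \<Rightarrow> 'b \<Rightarrow> 'b) \<Rightarrow> bool" where
  "cont_orbit_equiv G X \<alpha> K Y \<beta> \<longleftrightarrow>
     (\<exists>\<phi> \<psi> a b.
        homeomorphic_maps X Y \<phi> \<psi> \<and>
        continuous_map (prod_topology (discrete_topology (carrier G)) X)
                       (discrete_topology (carrier K)) (\<lambda>(g, x). a g x) \<and>
        continuous_map (prod_topology (discrete_topology (carrier K)) Y)
                       (discrete_topology (carrier G)) (\<lambda>(h, y). b h y) \<and>
        (\<forall>g\<in>carrier G. \<forall>x\<in>topspace X. \<phi> (\<alpha> g x) = \<beta> (a g x) (\<phi> x)) \<and>
        (\<forall>h\<in>carrier K. \<forall>y\<in>topspace Y. \<psi> (\<beta> h y) = \<alpha> (b h y) (\<psi> y)))"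

definition conjugate_actions ::
  "('g, 'm) monoid_scheme \<Rightarrow> 'a topology \<Rightarrow> ('g \<Rightarrow> 'a \<Rightarrow> 'a) \<Rightarrow> ('g \<Rightarrow> 'a \<Rightarrow> 'a) \<Rightarrow> bool" where
  "conjugate_actions G X \<alpha> \<beta> \<longleftrightarrow>
     (\<exists>\<phi> \<tau>. homeomorphic_map X X \<phi> \<and> \<tau> \<in> iso G G \<and>
        (\<forall>g\<in>carrier G. \<forall>x\<in>topspace X. \<phi> (\<alpha> g x) = \<beta> (\<tau> g) (\<phi> x)))"

end

theory Submission
  imports Defs
begin

(* At a point x where both actions are free, g \<mapsto> a g x is a bijection of D\<infinity> which changes the
   coarse coordinate dinf_height by a bounded amount along generators, so it pulls the half-line
   {dinf_height \<ge> 0} back to a set commensurable with a half-line or with its complement. The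
   relative index of this set to the half-spaces, read modulo the shift automorphisms, determines
   j \<in> {0, 1} and a unique label c x \<in> D\<infinity>, and the cocycle identity for a makes
   x \<mapsto> \<beta> (c x) (\<phi> x) intertwine \<alpha> g with \<beta> (dinf_shift j g). The label is locally constant,
   being determined by finitely many values of the locally constant cocycle; j is constant by
   minimality; free points are dense by Baire's theorem, so the intertwining holds everywhere.
   Composing with the map built in the same way from \<psi> gives x \<mapsto> \<alpha> (m x) x with m locally
   constant, which forces injectivity, and minimality and compactness make the map a
   homeomorphism. *)

section \<open>The infinite dihedral group\<close>

notation dinf_mult (infixl "\<star>" 70)

definition dinf_inv :: "int \<times> bool \<Rightarrow> int \<times> bool" where
  "dinf_inv g = (if snd g then fst g else - fst g, snd g)"

lemma dinf_mult_assoc: "(a \<star> b) \<star> c = a \<star> (b \<star> c)"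
  by (cases a; cases b; cases c) (auto simp: dinf_mult_def)

lemma dinf_mult_one_left [simp]: "(0, False) \<star> a = a"
  by (cases a) (auto simp: dinf_mult_def)

lemma dinf_mult_one_right [simp]: "a \<star> (0, False) = a"
  by (cases a) (auto simp: dinf_mult_def)

lemma dinf_inv_mult [simp]: "dinf_inv a \<star> a = (0, False)"
  by (cases a) (auto simp: dinf_mult_def dinf_inv_def)

lemma dinf_mult_inv [simp]: "a \<star> dinf_inv a = (0, False)"
  by (cases a) (auto simp: dinf_mult_def dinf_inv_def)

lemma dinf_mult_right_cancel [simp]: "b \<star> a = c \<star> a \<longleftrightarrow> b = c"
  by (cases a; cases b; cases c) (auto simp: dinf_mult_def)

lemma dinf_inv_mult_eq_one_iff [simp]: "dinf_inv q \<star> p = (0, False) \<longleftrightarrow> p = q"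
  by (cases p; cases q) (auto simp: dinf_mult_def dinf_inv_def)

lemma Dinf_simps [simp]:
  "carrier Dinf = UNIV" "mult Dinf = dinf_mult" "one Dinf = (0, False)"
  by (auto simp: Dinf_def)

lemma dinf_conj_eq_one: "dinf_inv g \<star> h \<star> g = (0, False) \<Longrightarrow> h = (0, False)"
  by (cases g; cases h) (auto simp: dinf_mult_def dinf_inv_def split: if_splits)

lemma dinf_conj_reflection: "snd (dinf_inv g \<star> (m, True) \<star> g)"
  by (cases g) (auto simp: dinf_mult_def dinf_inv_def)

lemma dinf_reflection_centralizer:
  "dinf_inv g \<star> (m, True) \<star> g = (m, True) \<Longrightarrow> g = (0, False) \<or> g = (m, True)"
  by (cases g) (auto simp: dinf_mult_def dinf_inv_def split: if_splits)

lemma bij_dinf_mult_right: "bij (\<lambda>g. g \<star> c)"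
proof (rule bijI')
  show "\<exists>x. y = x \<star> c" for y
    by (rule exI[of _ "y \<star> dinf_inv c"]) (simp add: dinf_mult_assoc)
qed simp

text \<open>The automorphism fixing \<open>s\<close> and sending \<open>t\<close> to \<open>s\<^sup>j t\<close>.\<close>

definition dinf_shift :: "int \<Rightarrow> int \<times> bool \<Rightarrow> int \<times> bool" where
  "dinf_shift j g = (if snd g then fst g + j else fst g, snd g)"

lemma dinf_shift_mult: "dinf_shift j (a \<star> b) = dinf_shift j a \<star> dinf_shift j b"
  by (cases a; cases b) (auto simp: dinf_shift_def dinf_mult_def)

lemma dinf_shift_inverse:
  "dinf_shift (- j) (dinf_shift j g) = g" "dinf_shift j (dinf_shift (- j) g) = g"
  by (cases g; auto simp: dinf_shift_def)+

lemma bij_dinf_shift: "bij (dinf_shift j)"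
  by (metis bijI' dinf_shift_inverse)

lemma dinf_shift_iso: "dinf_shift j \<in> iso Dinf Dinf"
  by (auto simp: iso_def hom_def dinf_shift_mult bij_dinf_shift)

lemma dinf_shift_eq_one_iff: "dinf_shift j g = (0, False) \<longleftrightarrow> g = (0, False)"
  by (cases g) (auto simp: dinf_shift_def)

definition dinf_height :: "int \<times> bool \<Rightarrow> int" where
  "dinf_height g = (if snd g then - fst g else fst g)"

lemma dinf_height_mult_left: "\<bar>dinf_height (e \<star> g) - dinf_height g\<bar> = \<bar>fst e\<bar>"
  by (cases e; cases g) (auto simp: dinf_height_def dinf_mult_def)

lemma dinf_height_mult_right:
  "dinf_height (g \<star> c) = (if snd c then - dinf_height g - fst c else dinf_height g + fst c)"
  by (cases c; cases g) (auto simp: dinf_height_def dinf_mult_def)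

lemma dinf_height_shift:
  "dinf_height (dinf_shift j g) = (if snd g then dinf_height g - j else dinf_height g)"
  by (cases g) (auto simp: dinf_height_def dinf_shift_def)

lemma finite_dinf_height_less: "finite {g. \<bar>dinf_height g\<bar> < r}"
proof -
  have "{g. \<bar>dinf_height g\<bar> < r} \<subseteq> {-r..r} \<times> UNIV"
    by (auto simp: dinf_height_def split: if_splits)
  then show ?thesis
    by (rule finite_subset) auto
qed

definition dinf_upper :: "int \<Rightarrow> (int \<times> bool) set" where
  "dinf_upper k = {g. k \<le> dinf_height g}"

lemma dinf_upper_diff_succ:
  "dinf_upper k - dinf_upper (k + 1) = {(k, False), (- k, True)}"
  "dinf_upper (k + 1) - dinf_upper k = {}"
  by (auto simp: dinf_upper_def dinf_height_def split: if_splits)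

lemma infinite_dinf_upper_Int: "infinite (dinf_upper a \<inter> dinf_upper b)"
proof
  assume "finite (dinf_upper a \<inter> dinf_upper b)"
  moreover have "range (\<lambda>n. (max a b + int n, False)) \<subseteq> dinf_upper a \<inter> dinf_upper b"
    by (auto simp: dinf_upper_def dinf_height_def)
  moreover have "inj (\<lambda>n::nat. (max a b + int n, False))"
    by (auto simp: inj_def)
  ultimately show False
    by (meson finite_imageD finite_subset infinite_UNIV_nat)
qed

lemma infinite_Compl_dinf_upper: "infinite (- dinf_upper k)"
proof
  assume "finite (- dinf_upper k)"
  moreover have "range (\<lambda>n. (k - 1 - int n, False)) \<subseteq> - dinf_upper k"
    by (auto simp: dinf_upper_def dinf_height_def)
  moreover have "inj (\<lambda>n::nat. (k - 1 - int n, False))"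
    by (auto simp: inj_def)
  ultimately show False
    by (meson finite_imageD finite_subset infinite_UNIV_nat)
qed

section \<open>Commensurable sets and their relative index\<close>

definition commensurable :: "'x set \<Rightarrow> 'x set \<Rightarrow> bool" where
  "commensurable A B \<longleftrightarrow> finite (A - B) \<and> finite (B - A)"

definition rel_index :: "'x set \<Rightarrow> 'x set \<Rightarrow> int" where
  "rel_index A B = int (card (A - B)) - int (card (B - A))"

lemma rel_index_within:
  assumes "finite Z" "A - B \<subseteq> Z" "B - A \<subseteq> Z"
  shows "rel_index A B = int (card (A \<inter> Z)) - int (card (B \<inter> Z))"
proof -
  have A: "A \<inter> Z = (A - B) \<union> (A \<inter> B \<inter> Z)" and B: "B \<inter> Z = (B - A) \<union> (A \<inter> B \<inter> Z)"
    using assms by auto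
  have fin: "finite (A - B)" "finite (B - A)" "finite (A \<inter> B \<inter> Z)"
    using assms finite_subset by auto
  have "card (A \<inter> Z) = card (A - B) + card (A \<inter> B \<inter> Z)"
    unfolding A by (rule card_Un_disjoint) (use fin in auto)
  moreover have "card (B \<inter> Z) = card (B - A) + card (A \<inter> B \<inter> Z)"
    unfolding B by (rule card_Un_disjoint) (use fin in auto)
  ultimately show ?thesis
    by (simp add: rel_index_def)
qed

lemma commensurable_refl [simp]: "commensurable A A"
  by (simp add: commensurable_def)

lemma commensurable_sym: "commensurable A B \<Longrightarrow> commensurable B A"
  by (auto simp: commensurable_def)

lemma commensurable_trans: "commensurable A B \<Longrightarrow> commensurable B C \<Longrightarrow> commensurable A C"
proof -
  assume "commensurable A B" "commensurable B C"
  moreover have "A - C \<subseteq> (A - B) \<union> (B - C)" "C - A \<subseteq> (C - B) \<union> (B - A)"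
    by auto
  ultimately show "commensurable A C"
    unfolding commensurable_def by (meson finite_UnI finite_subset)
qed

lemma rel_index_refl [simp]: "rel_index A A = 0"
  by (simp add: rel_index_def)

lemma rel_index_swap: "rel_index B A = - rel_index A B"
  by (simp add: rel_index_def)

lemma rel_index_trans:
  assumes "commensurable A B" "commensurable B C"
  shows "rel_index A C = rel_index A B + rel_index B C"
proof -
  define Z where "Z = (A - B) \<union> (B - A) \<union> (B - C) \<union> (C - B)"
  have Z: "finite Z"
    using assms by (auto simp: commensurable_def Z_def)
  have "rel_index A C = int (card (A \<inter> Z)) - int (card (C \<inter> Z))"
    "rel_index A B = int (card (A \<inter> Z)) - int (card (B \<inter> Z))"
    "rel_index B C = int (card (B \<inter> Z)) - int (card (C \<inter> Z))"
    by (rule rel_index_within[OF Z]; auto simp: Z_def)+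
  then show ?thesis
    by simp
qed

lemma Compl_diff_Compl: "(- A) - (- B) = B - (A :: 'x set)"
  by auto

lemma commensurable_Compl: "commensurable (- A) (- B) \<longleftrightarrow> commensurable A B"
  unfolding commensurable_def Compl_diff_Compl by auto

lemma rel_index_Compl: "rel_index (- A) (- B) = - rel_index A B"
  unfolding rel_index_def Compl_diff_Compl by simp

lemma bij_vimage:
  assumes "bij f"
  shows "card (f -` S) = card S" "finite (f -` S) \<longleftrightarrow> finite S"
proof -
  have "bij_betw f (f -` S) S"
    using assms by (auto simp: bij_betw_def bij_def inj_on_def)
  then show "card (f -` S) = card S" "finite (f -` S) \<longleftrightarrow> finite S"
    by (auto simp: bij_betw_same_card bij_betw_finite)
qed

lemma commensurable_vimage: "bij f \<Longrightarrow> commensurable (f -` A) (f -` B) \<longleftrightarrow> commensurable A B"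
  by (simp add: commensurable_def vimage_Diff[symmetric] bij_vimage)

lemma rel_index_vimage: "bij f \<Longrightarrow> rel_index (f -` A) (f -` B) = rel_index A B"
  by (simp add: rel_index_def vimage_Diff[symmetric] bij_vimage)

definition index_equiv :: "'x set \<Rightarrow> 'x set \<Rightarrow> bool" where
  "index_equiv A B \<longleftrightarrow> commensurable A B \<and> rel_index A B = 0"

lemma index_equiv_refl [simp]: "index_equiv A A"
  by (simp add: index_equiv_def)

lemma index_equiv_sym: "index_equiv A B \<Longrightarrow> index_equiv B A"
  by (auto simp: index_equiv_def commensurable_sym rel_index_swap[of A])

lemma index_equiv_trans: "index_equiv A B \<Longrightarrow> index_equiv B C \<Longrightarrow> index_equiv A C"
  by (auto simp: index_equiv_def intro: commensurable_trans dest: rel_index_trans)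

lemma index_equiv_Compl: "index_equiv (- A) (- B) \<longleftrightarrow> index_equiv A B"
  by (auto simp: index_equiv_def commensurable_Compl rel_index_Compl)

lemma index_equiv_vimage: "bij f \<Longrightarrow> index_equiv (f -` A) (f -` B) \<longleftrightarrow> index_equiv A B"
  by (simp add: index_equiv_def commensurable_vimage rel_index_vimage)

lemma dinf_upper_succ_index:
  "commensurable (dinf_upper k) (dinf_upper (k + 1))" "rel_index (dinf_upper k) (dinf_upper (k + 1)) = 2"
  by (simp_all add: commensurable_def rel_index_def dinf_upper_diff_succ)

lemma dinf_upper_index_le:
  assumes "a \<le> b"
  shows "commensurable (dinf_upper a) (dinf_upper b) \<and> rel_index (dinf_upper a) (dinf_upper b) = 2 * (b - a)"
  using assms
proof (induction b rule: int_ge_induct)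
  case (step b)
  then have c: "commensurable (dinf_upper a) (dinf_upper b)"
    and i: "rel_index (dinf_upper a) (dinf_upper b) = 2 * (b - a)"
    by auto
  show ?case
    using commensurable_trans[OF c dinf_upper_succ_index(1)]
      rel_index_trans[OF c dinf_upper_succ_index(1)] i dinf_upper_succ_index(2)[of b]
    by simp
qed simp

lemma dinf_upper_index:
  "commensurable (dinf_upper a) (dinf_upper b)" "rel_index (dinf_upper a) (dinf_upper b) = 2 * (b - a)"
proof -
  have "commensurable (dinf_upper a) (dinf_upper b) \<and> rel_index (dinf_upper a) (dinf_upper b) = 2 * (b - a)"
  proof (cases "a \<le> b")
    case False
    then have "commensurable (dinf_upper b) (dinf_upper a) \<and> rel_index (dinf_upper b) (dinf_upper a) = 2 * (a - b)"
      by (intro dinf_upper_index_le) simp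
    then show ?thesis
      using commensurable_sym[of "dinf_upper b"] rel_index_swap[of "dinf_upper b"] by auto
  qed (rule dinf_upper_index_le)
  then show "commensurable (dinf_upper a) (dinf_upper b)" "rel_index (dinf_upper a) (dinf_upper b) = 2 * (b - a)"
    by auto
qed

lemma dinf_upper_shift_index:
  assumes "j \<in> {0, 1}"
  shows "commensurable (dinf_upper k) (dinf_shift j -` dinf_upper k)"
    "rel_index (dinf_upper k) (dinf_shift j -` dinf_upper k) = j"
proof -
  have d1: "dinf_upper k - dinf_shift j -` dinf_upper k = (if j = 1 then {(-k, True)} else {})"
    and d2: "dinf_shift j -` dinf_upper k - dinf_upper k = {}"
    using assms by (auto simp: dinf_upper_def dinf_height_shift dinf_height_def dinf_shift_def
        split: if_splits)
  show "commensurable (dinf_upper k) (dinf_shift j -` dinf_upper k)"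
    "rel_index (dinf_upper k) (dinf_shift j -` dinf_upper k) = j"
    using assms unfolding commensurable_def rel_index_def d1 d2 by auto
qed

lemma not_commensurable_dinf_upper_Compl: "\<not> commensurable (dinf_upper a) (- dinf_upper b)"
  using infinite_dinf_upper_Int[of a b] by (auto simp: commensurable_def Diff_eq)

section \<open>Half-spaces\<close>

definition dinf_half_space :: "int \<times> bool \<Rightarrow> (int \<times> bool) set" where
  "dinf_half_space c = {q. 0 \<le> dinf_height (q \<star> c)}"

lemma dinf_half_space_eq:
  "dinf_half_space c = (if snd c then - dinf_upper (1 - fst c) else dinf_upper (- fst c))"
  by (auto simp: dinf_half_space_def dinf_upper_def dinf_height_mult_right)

lemma Compl_dinf_half_space: "- dinf_half_space c = dinf_half_space (c \<star> (1, True))"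
  by (auto simp: dinf_half_space_def dinf_height_mult_right dinf_mult_assoc[symmetric])

definition equiv_half_space :: "int \<Rightarrow> (int \<times> bool) set \<Rightarrow> int \<times> bool \<Rightarrow> bool" where
  "equiv_half_space j K c \<longleftrightarrow> index_equiv K (dinf_shift j -` dinf_half_space c)"

lemma index_equiv_dinf_half_space_iff:
  "index_equiv (dinf_half_space c1) (dinf_half_space c2) \<longleftrightarrow> c1 = c2"
proof
  assume eq: "index_equiv (dinf_half_space c1) (dinf_half_space c2)"
  obtain m1 e1 m2 e2 where c: "c1 = (m1, e1)" "c2 = (m2, e2)"
    by fastforce
  show "c1 = c2"
  proof (cases e1; cases e2)
    assume "e1" "e2"
    then have "rel_index (- dinf_upper (1 - m1)) (- dinf_upper (1 - m2)) = 0"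
      using eq c by (simp add: index_equiv_def dinf_half_space_eq)
    then show ?thesis
      using c \<open>e1\<close> \<open>e2\<close> by (simp add: rel_index_Compl dinf_upper_index)
  next
    assume "\<not> e1" "\<not> e2"
    then have "rel_index (dinf_upper (- m1)) (dinf_upper (- m2)) = 0"
      using eq c by (simp add: index_equiv_def dinf_half_space_eq)
    then show ?thesis
      using c \<open>\<not> e1\<close> \<open>\<not> e2\<close> by (simp add: dinf_upper_index)
  qed (use eq c not_commensurable_dinf_upper_Compl commensurable_sym
      in \<open>auto simp: index_equiv_def dinf_half_space_eq\<close>)
qed simp

lemma equiv_half_space_unique:
  assumes "equiv_half_space j K c1" "equiv_half_space j K c2"
  shows "c1 = c2"
proof -
  have "index_equiv (dinf_shift j -` dinf_half_space c1) (dinf_shift j -` dinf_half_space c2)"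
    using assms unfolding equiv_half_space_def by (blast intro: index_equiv_trans index_equiv_sym)
  then show ?thesis
    by (simp add: index_equiv_vimage bij_dinf_shift index_equiv_dinf_half_space_iff)
qed

text \<open>Parity of the index decides \<open>j\<close>: translations of half-spaces change it by even
  amounts, while the shift by one changes it by one.\<close>

lemma equiv_half_space_exists_upper:
  assumes "commensurable K (dinf_upper 0)"
  shows "\<exists>j\<in>{0, 1}. \<exists>c. equiv_half_space j K c"
proof -
  define N where "N = rel_index K (dinf_upper 0)"
  define j where "j = N mod 2"
  define m where "m = (N + j) div 2"
  have j: "j \<in> {0, 1}"
    unfolding j_def by auto
  have m: "2 * m = N + j"
    unfolding m_def j_def by presburger
  have H: "dinf_half_space (m, False) = dinf_upper (- m)"
    by (simp add: dinf_half_space_eq)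
  have c1: "commensurable (dinf_upper 0) (dinf_upper (- m))"
    and i1: "rel_index (dinf_upper 0) (dinf_upper (- m)) = - 2 * m"
    using dinf_upper_index[of 0 "- m"] by auto
  note c2 = dinf_upper_shift_index(1)[OF j, of "- m"]
    and i2 = dinf_upper_shift_index(2)[OF j, of "- m"]
  have c12: "commensurable (dinf_upper 0) (dinf_shift j -` dinf_upper (- m))"
    by (rule commensurable_trans[OF c1 c2])
  have "index_equiv K (dinf_shift j -` dinf_upper (- m))"
    using commensurable_trans[OF assms c12] rel_index_trans[OF assms c12]
      rel_index_trans[OF c1 c2] i1 i2 m
    by (simp add: index_equiv_def N_def)
  then have "equiv_half_space j K (m, False)"
    by (simp add: equiv_half_space_def H)
  then show ?thesis
    using j by blast
qed

lemma equiv_half_space_exists: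
  assumes "commensurable K (dinf_upper 0) \<or> commensurable K (- dinf_upper 0)"
  shows "\<exists>j\<in>{0, 1}. \<exists>c. equiv_half_space j K c"
  using assms
proof
  assume "commensurable K (- dinf_upper 0)"
  then have "commensurable (- K) (dinf_upper 0)"
    using commensurable_Compl[of K "- dinf_upper 0"] by simp
  then obtain j c where "j \<in> {0, 1}" "equiv_half_space j (- K) c"
    using equiv_half_space_exists_upper by blast
  then have "equiv_half_space j K (c \<star> (1, True))"
    unfolding equiv_half_space_def Compl_dinf_half_space[symmetric] vimage_Compl
    using index_equiv_Compl[of K "- (dinf_shift j -` dinf_half_space c)"] by simp
  then show ?thesis
    using \<open>j \<in> {0, 1}\<close> by blast
qed (rule equiv_half_space_exists_upper)

lemma index_equiv_vimage_transfer:
  assumes P: "bij P" and Q: "bij Q" and ST: "commensurable S T"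
    and eq: "index_equiv (P -` S) (Q -` S)"
  shows "index_equiv (P -` T) (Q -` T)"
proof -
  have c1: "commensurable (P -` T) (P -` S)" and c3: "commensurable (Q -` S) (Q -` T)"
    using ST commensurable_sym by (auto simp: commensurable_vimage P Q)
  have c2: "commensurable (P -` S) (Q -` S)" and i2: "rel_index (P -` S) (Q -` S) = 0"
    using eq by (auto simp: index_equiv_def)
  have c12: "commensurable (P -` T) (Q -` S)"
    by (rule commensurable_trans[OF c1 c2])
  show ?thesis
    unfolding index_equiv_def
    using commensurable_trans[OF c12 c3] rel_index_trans[OF c12 c3] rel_index_trans[OF c1 c2] i2
    by (simp add: rel_index_vimage P Q rel_index_swap[of S])
qed

lemma index_equiv_vimage_dinf_half_space:
  assumes P: "bij P" and Q: "bij Q"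
    and eq: "index_equiv (P -` dinf_upper 0) (Q -` dinf_upper 0)"
  shows "index_equiv (P -` dinf_half_space w) (Q -` dinf_half_space w)"
proof (cases "snd w")
  case True
  have "index_equiv (P -` (- dinf_upper 0)) (Q -` (- dinf_upper 0))"
    using eq by (simp add: vimage_Compl index_equiv_Compl)
  moreover have "commensurable (- dinf_upper 0) (- dinf_upper (1 - fst w))"
    by (simp add: commensurable_Compl dinf_upper_index)
  ultimately show ?thesis
    using True index_equiv_vimage_transfer[OF P Q] by (simp add: dinf_half_space_eq)
next
  case False
  then show ?thesis
    using index_equiv_vimage_transfer[OF P Q _ eq] by (simp add: dinf_half_space_eq dinf_upper_index)
qed

lemma equiv_half_space_transfer:
  assumes P: "bij P" and K: "equiv_half_space j (P -` dinf_upper 0) c"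
  shows "equiv_half_space j ((\<lambda>h. P (h \<star> g) \<star> w) -` dinf_upper 0) (dinf_shift j g \<star> c \<star> w)"
proof -
  define Q where "Q h = dinf_shift j h \<star> c" for h
  define \<rho> where "\<rho> h = h \<star> g" for h
  have "Q = (\<lambda>h. h \<star> c) \<circ> dinf_shift j"
    by (auto simp: Q_def)
  then have Q: "bij Q"
    using bij_comp[OF bij_dinf_shift bij_dinf_mult_right] by metis
  have \<rho>: "bij \<rho>"
    unfolding \<rho>_def by (rule bij_dinf_mult_right)
  have "index_equiv (P -` dinf_upper 0) (Q -` dinf_upper 0)"
    using K by (simp add: equiv_half_space_def Q_def dinf_half_space_def dinf_upper_def vimage_def)
  then have "index_equiv (P -` dinf_half_space w) (Q -` dinf_half_space w)"
    by (rule index_equiv_vimage_dinf_half_space[OF P Q])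
  moreover have "(\<lambda>h. P (h \<star> g) \<star> w) -` dinf_upper 0 = \<rho> -` (P -` dinf_half_space w)"
    by (auto simp: \<rho>_def dinf_half_space_def dinf_upper_def)
  moreover have "dinf_shift j -` dinf_half_space (dinf_shift j g \<star> c \<star> w) = \<rho> -` (Q -` dinf_half_space w)"
    by (auto simp: \<rho>_def Q_def dinf_half_space_def dinf_shift_mult dinf_mult_assoc)
  ultimately show ?thesis
    by (simp add: equiv_half_space_def index_equiv_vimage \<rho>)
qed

section \<open>Bijections of bounded displacement\<close>

locale dinf_coarse_bijection =
  fixes P P' :: "int \<times> bool \<Rightarrow> int \<times> bool" and M R0 :: int
  assumes P_inverse [simp]: "\<And>g. P' (P g) = g" "\<And>p. P (P' p) = p"
    and generator_step:
      "\<And>g u. u \<in> {(1, False), (0, True)} \<Longrightarrow> \<bar>dinf_height (P (u \<star> g)) - dinf_height (P g)\<bar> \<le> M"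
    and inverse_band:
      "\<And>p. 0 \<le> dinf_height p \<Longrightarrow> dinf_height p < M \<Longrightarrow> \<bar>dinf_height (P' p)\<bar> \<le> R0"
begin

definition "upper_preimage = P -` dinf_upper 0"
definition "upper_end_in \<longleftrightarrow> (R0 + 2, False) \<in> upper_preimage"

lemma bij_P: "bij P"
  by (metis bijI' P_inverse)

text \<open>A generator step can only leave \<open>upper_preimage\<close> near height zero, since the image of
  one of its ends then lies in the band \<open>0 \<le> dinf_height p < M\<close>.\<close>

lemma crossing_near_zero:
  assumes u: "u \<in> {(1, False), (0, True)}" and crossing: "(g \<in> upper_preimage) \<noteq> (u \<star> g \<in> upper_preimage)"
  shows "\<bar>dinf_height g\<bar> \<le> R0 + 1"
proof -
  have step: "\<bar>dinf_height (P (u \<star> g)) - dinf_height (P g)\<bar> \<le> M"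
    by (rule generator_step[OF u])
  have "\<bar>dinf_height (u \<star> g) - dinf_height g\<bar> \<le> 1"
    using dinf_height_mult_left[of u g] u by auto
  moreover have "\<bar>dinf_height g\<bar> \<le> R0 \<or> \<bar>dinf_height (u \<star> g)\<bar> \<le> R0"
  proof (cases "g \<in> upper_preimage")
    case True
    then have "0 \<le> dinf_height (P g)" "dinf_height (P g) < M"
      using crossing step by (auto simp: upper_preimage_def dinf_upper_def)
    then show ?thesis
      using inverse_band[of "P g"] by simp
  next
    case False
    then have "0 \<le> dinf_height (P (u \<star> g))" "dinf_height (P (u \<star> g)) < M"
      using crossing step by (auto simp: upper_preimage_def dinf_upper_def)
    then show ?thesis
      using inverse_band[of "P (u \<star> g)"] by simp
  qed
  ultimately show ?thesis
    by linarith
qed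

lemma generator_step_preserves:
  assumes "u \<in> {(1, False), (0, True)}" and "R0 + 2 \<le> \<bar>dinf_height g\<bar>"
  shows "(u \<star> g \<in> upper_preimage) = (g \<in> upper_preimage)"
  using crossing_near_zero[of u g] assms by fastforce

lemma translation_up:
  assumes "R0 + 2 \<le> n"
  shows "((n, False) \<in> upper_preimage) = upper_end_in"
  using assms
proof (induction n rule: int_ge_induct)
  case (step n)
  have "(1, False) \<star> (n, False) = (n + 1, False)"
    by (simp add: dinf_mult_def)
  moreover have "((1, False) \<star> (n, False) \<in> upper_preimage) = ((n, False) \<in> upper_preimage)"
    using step.hyps by (intro generator_step_preserves) (auto simp: dinf_height_def)
  ultimately show ?case
    using step.IH by simp
qed (simp add: upper_end_in_def)

lemma translation_down:
  assumes "n \<le> - R0 - 2"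
  shows "((n, False) \<in> upper_preimage) = ((- R0 - 2, False) \<in> upper_preimage)"
  using assms
proof (induction n rule: int_le_induct)
  case (step n)
  have "(1, False) \<star> (n - 1, False) = (n, False)"
    by (simp add: dinf_mult_def)
  moreover have "((1, False) \<star> (n - 1, False) \<in> upper_preimage) = ((n - 1, False) \<in> upper_preimage)"
    using step.hyps by (intro generator_step_preserves) (auto simp: dinf_height_def)
  ultimately show ?case
    using step.IH by simp
qed simp

lemma reflection_far:
  assumes "R0 + 2 \<le> \<bar>m\<bar>"
  shows "((m, True) \<in> upper_preimage) = ((- m, False) \<in> upper_preimage)"
proof -
  have "(0, True) \<star> (- m, False) = (m, True)"
    by (simp add: dinf_mult_def)
  moreover have "((0, True) \<star> (- m, False) \<in> upper_preimage) = ((- m, False) \<in> upper_preimage)"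
    using assms by (intro generator_step_preserves) (auto simp: dinf_height_def)
  ultimately show ?thesis
    by simp
qed

lemma far_membership:
  assumes "R0 + 2 \<le> \<bar>dinf_height g\<bar>"
  shows "(g \<in> upper_preimage) = (if 0 \<le> dinf_height g then upper_end_in else (- R0 - 2, False) \<in> upper_preimage)"
proof -
  obtain m e where g: "g = (m, e)"
    by fastforce
  show ?thesis
  proof (cases e)
    case True
    then show ?thesis
      using assms g reflection_far[of m] translation_up[of "- m"] translation_down[of "- m"]
      by (auto simp: dinf_height_def)
  next
    case False
    then show ?thesis
      using assms g translation_up[of m] translation_down[of m]
      by (auto simp: dinf_height_def)
  qed
qed

text \<open>Since \<open>P\<close> is a bijection, neither \<open>upper_preimage\<close> nor its complement is finite, so
  the two far ends of the group lie on opposite sides of it.\<close>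

lemma lower_end_in: "((- R0 - 2, False) \<in> upper_preimage) \<longleftrightarrow> \<not> upper_end_in"
proof (rule ccontr)
  assume same: "\<not> (((- R0 - 2, False) \<in> upper_preimage) \<longleftrightarrow> \<not> upper_end_in)"
  define B where "B = {g. \<bar>dinf_height g\<bar> < R0 + 2}"
  have "finite B"
    unfolding B_def by (rule finite_dinf_height_less)
  moreover have "g \<in> upper_preimage \<longleftrightarrow> upper_end_in" if "g \<notin> B" for g
    using far_membership[of g] that same by (auto simp: B_def)
  then have "upper_preimage \<subseteq> B \<or> - upper_preimage \<subseteq> B"
    by blast
  ultimately have "finite (P -` dinf_upper 0) \<or> finite (P -` (- dinf_upper 0))"
    by (auto simp: upper_preimage_def vimage_Compl intro: finite_subset)
  then show False
    using bij_vimage(2)[OF bij_P] infinite_dinf_upper_Int[of 0 0] infinite_Compl_dinf_upper by auto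
qed

lemma upper_preimage_commensurable:
  "commensurable upper_preimage (dinf_upper 0) \<or> commensurable upper_preimage (- dinf_upper 0)"
proof -
  define B where "B = {g. \<bar>dinf_height g\<bar> < R0 + 2}"
  have "finite B"
    unfolding B_def by (rule finite_dinf_height_less)
  moreover have "g \<in> upper_preimage \<longleftrightarrow> (g \<in> dinf_upper 0 \<longleftrightarrow> upper_end_in)" if "g \<notin> B" for g
    using far_membership[of g] lower_end_in that by (auto simp: B_def dinf_upper_def)
  then have "upper_preimage - dinf_upper 0 \<subseteq> B \<and> dinf_upper 0 - upper_preimage \<subseteq> B \<or>
      upper_preimage - (- dinf_upper 0) \<subseteq> B \<and> (- dinf_upper 0) - upper_preimage \<subseteq> B"
    by blast
  ultimately show ?thesis
    unfolding commensurable_def by (meson finite_subset)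
qed

end

lemma dinf_coarse_bijection_upper_preimage_eq:
  assumes "dinf_coarse_bijection P P' M R0" "dinf_coarse_bijection Q Q' M R0"
    and window: "\<And>g. \<bar>dinf_height g\<bar> < R0 + 2 \<or> g = (R0 + 2, False) \<Longrightarrow>
      (0 \<le> dinf_height (P g)) = (0 \<le> dinf_height (Q g))"
  shows "P -` dinf_upper 0 = Q -` dinf_upper 0"
proof -
  interpret A: dinf_coarse_bijection P P' M R0 by fact
  interpret B: dinf_coarse_bijection Q Q' M R0 by fact
  have "A.upper_end_in = B.upper_end_in"
    using window[of "(R0 + 2, False)"]
    by (simp add: A.upper_end_in_def B.upper_end_in_def A.upper_preimage_def B.upper_preimage_def dinf_upper_def)
  then have "g \<in> A.upper_preimage \<longleftrightarrow> g \<in> B.upper_preimage" for g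
    using window[of g] A.far_membership[of g] B.far_membership[of g] A.lower_end_in B.lower_end_in
    by (cases "\<bar>dinf_height g\<bar> < R0 + 2") (auto simp: A.upper_preimage_def B.upper_preimage_def dinf_upper_def)
  then show ?thesis
    unfolding A.upper_preimage_def B.upper_preimage_def by blast
qed

lemma continuous_map_locally_eq:
  assumes "\<And>y. y \<in> topspace X \<Longrightarrow>
    \<exists>T g. openin X T \<and> y \<in> T \<and> continuous_map X Y g \<and> (\<forall>z\<in>T. f z = g z)"
  shows "continuous_map X Y f"
  unfolding continuous_map_def
proof (intro conjI allI impI)
  show "f \<in> topspace X \<rightarrow> topspace Y"
  proof
    fix y assume y: "y \<in> topspace X"
    then obtain T g where "y \<in> T" "continuous_map X Y g" "\<forall>z\<in>T. f z = g z"
      using assms by blast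
    then show "f y \<in> topspace Y"
      using continuous_map_image_subset_topspace y by fastforce
  qed
next
  fix V assume V: "openin Y V"
  show "openin X {x \<in> topspace X. f x \<in> V}"
  proof (subst openin_subopen, intro ballI)
    fix y assume "y \<in> {x \<in> topspace X. f x \<in> V}"
    then have y: "y \<in> topspace X" "f y \<in> V"
      by auto
    obtain T g where T: "openin X T" "y \<in> T" "continuous_map X Y g" "\<forall>z\<in>T. f z = g z"
      using assms y(1) by blast
    have "openin X (T \<inter> {x \<in> topspace X. g x \<in> V})"
      using T openin_continuous_map_preimage[OF T(3) V] by blast
    moreover have "y \<in> T \<inter> {x \<in> topspace X. g x \<in> V}"
      using T y by auto
    moreover have "T \<inter> {x \<in> topspace X. g x \<in> V} \<subseteq> {x \<in> topspace X. f x \<in> V}"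
      using T by auto
    ultimately show "\<exists>T. openin X T \<and> y \<in> T \<and> T \<subseteq> {x \<in> topspace X. f x \<in> V}"
      by blast
  qed
qed

lemma continuous_map_discrete_combine:
  assumes f: "continuous_map X (discrete_topology UNIV) f"
    and g: "continuous_map X (discrete_topology UNIV) g"
  shows "continuous_map X (discrete_topology UNIV) (\<lambda>x. F (f x) (g x))"
proof (rule continuous_map_locally_eq)
  fix y assume y: "y \<in> topspace X"
  have "openin X ({x \<in> topspace X. f x \<in> {f y}} \<inter> {x \<in> topspace X. g x \<in> {g y}})"
    by (intro openin_Int openin_continuous_map_preimage[OF f] openin_continuous_map_preimage[OF g]) simp_all
  then show "\<exists>T h. openin X T \<and> y \<in> T \<and> continuous_map X (discrete_topology UNIV) h \<and>
      (\<forall>z\<in>T. F (f z) (g z) = h z)"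
    using y by (intro exI[of _ "{x \<in> topspace X. f x \<in> {f y}} \<inter> {x \<in> topspace X. g x \<in> {g y}}"]
        exI[of _ "\<lambda>_. F (f y) (g y)"]) auto
qed

lemma finite_image_compact_discrete:
  assumes "compact_space X" "continuous_map X (discrete_topology U) f"
  shows "finite (f ` topspace X)"
  using image_compactin[of X "topspace X" "discrete_topology U" f] assms
  by (simp add: compact_space_def compactin_discrete_topology)

lemma Baire_dense_compact_Hausdorff:
  assumes "compact_space X" "Hausdorff_space X" "countable \<G>"
    and "\<And>T. T \<in> \<G> \<Longrightarrow> closedin X T \<and> X interior_of T = {}"
    and "topspace X - S \<subseteq> \<Union>\<G>"
  shows "X closure_of S = topspace X"
proof -
  have "X interior_of \<Union>\<G> = {}"
    using assms compact_imp_locally_compact_space compact_Hausdorff_imp_regular_space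
    by (intro Baire_category_alt) auto
  then have "X interior_of (topspace X - S) = {}"
    using assms(5) interior_of_mono by blast
  then show ?thesis
    by (simp add: closure_of_eq_topspace)
qed

section \<open>Minimal actions of the infinite dihedral group\<close>

locale dinf_minimal_action =
  fixes X :: "'a topology" and \<alpha> :: "int \<times> bool \<Rightarrow> 'a \<Rightarrow> 'a"
  assumes compact: "compact_space X" and Hausdorff: "Hausdorff_space X"
    and infinite: "infinite (topspace X)"
    and action: "cont_action Dinf X \<alpha>" and minimal: "minimal_action Dinf X \<alpha>"
begin

lemma continuous_act: "continuous_map X X (\<alpha> g)"
  using action unfolding cont_action_def Dinf_simps ball_UNIV by blast

lemma act_one [simp]: "x \<in> topspace X \<Longrightarrow> \<alpha> (0, False) x = x"
  using action unfolding cont_action_def Dinf_simps ball_UNIV by blast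

lemma act_mult: "x \<in> topspace X \<Longrightarrow> \<alpha> (g \<star> h) x = \<alpha> g (\<alpha> h x)"
  using action unfolding cont_action_def Dinf_simps ball_UNIV by blast

lemma act_in_topspace [simp]: "x \<in> topspace X \<Longrightarrow> \<alpha> g x \<in> topspace X"
  using continuous_act[of g] by (simp add: continuous_map_def Pi_iff)

lemma act_inv_act [simp]: "x \<in> topspace X \<Longrightarrow> \<alpha> (dinf_inv g) (\<alpha> g x) = x"
  by (metis act_mult dinf_inv_mult act_one)

lemma orbit_dense: "x \<in> topspace X \<Longrightarrow> X closure_of range (\<lambda>g. \<alpha> g x) = topspace X"
  using minimal unfolding minimal_action_def Dinf_simps by (simp add: full_SetCompr_eq[symmetric])

lemma closedin_orbit_superset:
  assumes "closedin X S" "x \<in> topspace X" "range (\<lambda>g. \<alpha> g x) \<subseteq> S"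
  shows "S = topspace X"
  using closure_of_minimal[OF assms(3,1)] orbit_dense[OF assms(2)] closedin_subset[OF assms(1)]
  by blast

lemma orbit_meets_open: "x \<in> topspace X \<Longrightarrow> openin X V \<Longrightarrow> V \<noteq> {} \<Longrightarrow> \<exists>g. \<alpha> g x \<in> V"
  using orbit_dense[of x] by (auto simp: dense_intersects_open)

lemma infinite_orbit:
  assumes x: "x \<in> topspace X"
  shows "infinite (range (\<lambda>g. \<alpha> g x))"
proof
  assume "finite (range (\<lambda>g. \<alpha> g x))"
  then have "closedin X (range (\<lambda>g. \<alpha> g x))"
    using Hausdorff_imp_t1_space[OF Hausdorff] x by (auto simp: t1_space_closedin_finite)
  then have "range (\<lambda>g. \<alpha> g x) = topspace X"
    using closedin_orbit_superset x by blast
  with \<open>finite (range (\<lambda>g. \<alpha> g x))\<close> show False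
    using infinite by simp
qed

lemma not_openin_singleton:
  assumes p: "p \<in> topspace X"
  shows "\<not> openin X {p}"
proof
  assume open_p: "openin X {p}"
  have "openin X {y}" if y: "y \<in> topspace X" for y
  proof -
    obtain g where g: "\<alpha> g y = p"
      using orbit_meets_open[OF y open_p] by auto
    have "{z \<in> topspace X. \<alpha> g z \<in> {p}} = {y}"
      using y g by (auto, metis act_inv_act)
    moreover have "openin X {z \<in> topspace X. \<alpha> g z \<in> {p}}"
      by (rule openin_continuous_map_preimage[OF continuous_act open_p])
    ultimately show ?thesis
      by simp
  qed
  then have "discrete_topology (topspace X) = X"
    by (simp add: discrete_topology_unique)
  then show False
    using compact infinite compact_space_discrete_topology by metis
qed

lemma infinite_orbit_Int_open:
  assumes x: "x \<in> topspace X" and U: "openin X U" "U \<noteq> {}"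
  shows "infinite (range (\<lambda>g. \<alpha> g x) \<inter> U)"
proof
  let ?S = "range (\<lambda>g. \<alpha> g x) \<inter> U"
  assume fin: "finite ?S"
  have t1: "t1_space X"
    using Hausdorff by (rule Hausdorff_imp_t1_space)
  have UX: "U \<subseteq> topspace X"
    using U openin_subset by blast
  have "U \<subseteq> ?S"
  proof (rule ccontr)
    assume "\<not> U \<subseteq> ?S"
    moreover have "openin X (U - ?S)"
      using t1 fin UX U by (intro openin_diff) (auto simp: t1_space_closedin_finite)
    ultimately obtain g where "\<alpha> g x \<in> U - ?S"
      using orbit_meets_open[OF x] by blast
    then show False
      by auto
  qed
  then have fU: "finite U"
    using fin finite_subset by blast
  obtain p where p: "p \<in> U"
    using U by blast
  have "openin X (U - (U - {p}))"
    using t1 fU UX U by (intro openin_diff) (auto simp: t1_space_closedin_finite)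
  moreover have "U - (U - {p}) = {p}"
    using p by auto
  ultimately show False
    using not_openin_singleton p UX by auto
qed

lemma translation_fixed_multiple:
  assumes x: "x \<in> topspace X" and fixed: "\<alpha> (k, False) x = x"
  shows "\<alpha> (q * k, False) x = x"
proof -
  have fixed': "\<alpha> (- k, False) x = x"
    using act_inv_act[OF x, of "(k, False)"] fixed by (simp add: dinf_inv_def)
  show ?thesis
  proof (induction q rule: int_induct[where k = 0])
    case (step1 i)
    have "((i + 1) * k, False) = (k, False) \<star> (i * k, False)"
      by (simp add: dinf_mult_def algebra_simps)
    then show ?case
      using step1 fixed x by (simp add: act_mult)
  next
    case (step2 i)
    have "((i - 1) * k, False) = (- k, False) \<star> (i * k, False)"
      by (simp add: dinf_mult_def algebra_simps)
    then show ?case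
      using step2 fixed' x by (simp add: act_mult)
  qed (use x in simp)
qed

text \<open>A translation with a fixed point would make the orbit finite.\<close>

lemma translation_no_fixed_point:
  assumes x: "x \<in> topspace X" and "n \<noteq> 0"
  shows "\<alpha> (n, False) x \<noteq> x"
proof
  assume fixed: "\<alpha> (n, False) x = x"
  define k where "k = \<bar>n\<bar>"
  have k: "0 < k"
    using \<open>n \<noteq> 0\<close> by (simp add: k_def)
  have fixed_k: "\<alpha> (k, False) x = x"
    using translation_fixed_multiple[OF x fixed, of "sgn n"] by (simp add: k_def abs_sgn mult.commute)
  have "range (\<lambda>g. \<alpha> g x) \<subseteq> (\<lambda>g. \<alpha> g x) ` ({0..<k} \<times> UNIV)"
  proof clarify
    fix m e
    define q where "q = (if e then - 1 else 1) * (m div k)"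
    have "(m, e) = (m mod k, e) \<star> (q * k, False)"
      by (simp add: q_def dinf_mult_def)
    then have "\<alpha> (m, e) x = \<alpha> (m mod k, e) (\<alpha> (q * k, False) x)"
      using x by (metis act_mult)
    then have "\<alpha> (m, e) x = \<alpha> (m mod k, e) x"
      using translation_fixed_multiple[OF x fixed_k] by simp
    then show "\<alpha> (m, e) x \<in> (\<lambda>g. \<alpha> g x) ` ({0..<k} \<times> UNIV)"
      using k by auto
  qed
  then have "finite (range (\<lambda>g. \<alpha> g x))"
    by (rule finite_subset) simp
  then show False
    using infinite_orbit[OF x] by simp
qed

definition fixed_points :: "int \<times> bool \<Rightarrow> 'a set" where
  "fixed_points w = {x \<in> topspace X. \<alpha> w x = x}"

lemma closedin_fixed_points: "closedin X (fixed_points w)"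
  unfolding fixed_points_def
  using closedin_continuous_maps_eq[OF Hausdorff continuous_act[of w] continuous_map_id] by simp

lemma reflection_fixed_along_orbit:
  assumes x: "x \<in> topspace X" "\<alpha> (m, True) x = x"
    and gx: "\<alpha> (m, True) (\<alpha> g x) = \<alpha> g x"
  shows "g = (0, False) \<or> g = (m, True)"
proof -
  define v where "v = dinf_inv g \<star> (m, True) \<star> g"
  have v_fixed: "\<alpha> v x = x"
    using x gx by (simp add: v_def act_mult)
  have "snd v"
    using dinf_conj_reflection[of g m] by (simp add: v_def)
  then have "(m - fst v, False) = (m, True) \<star> v"
    by (cases v) (simp add: dinf_mult_def)
  then have "\<alpha> (m - fst v, False) x = \<alpha> (m, True) (\<alpha> v x)"
    using x by (simp only: act_mult)
  then have "\<alpha> (m - fst v, False) x = x"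
    using v_fixed x by simp
  then have "v = (m, True)"
    using translation_no_fixed_point[OF x(1), of "m - fst v"] \<open>snd v\<close> by (cases v) auto
  then show ?thesis
    using dinf_reflection_centralizer[of g m] by (simp add: v_def)
qed

text \<open>A reflection fixing an open set \<open>U\<close> pointwise would confine the infinite set of orbit
  points in \<open>U\<close> to two points.\<close>

lemma interior_fixed_points:
  assumes w: "w \<noteq> (0, False)"
  shows "X interior_of fixed_points w = {}"
proof (cases "snd w")
  case False
  then have "fixed_points w = {}"
    using w translation_no_fixed_point by (cases w) (auto simp: fixed_points_def)
  then show ?thesis
    by simp
next
  case True
  then obtain m where m: "w = (m, True)"
    by (cases w) auto
  show ?thesis
  proof (rule ccontr)
    define U where "U = X interior_of fixed_points w"
    assume "X interior_of fixed_points w \<noteq> {}"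
    then obtain x where "x \<in> U"
      by (auto simp: U_def)
    have U: "openin X U" "U \<noteq> {}" "U \<subseteq> fixed_points w"
      using \<open>x \<in> U\<close> interior_of_subset[of X "fixed_points w"] by (auto simp: U_def)
    then have x: "x \<in> topspace X" "\<alpha> w x = x"
      using \<open>x \<in> U\<close> by (auto simp: fixed_points_def)
    have "range (\<lambda>g. \<alpha> g x) \<inter> U \<subseteq> {x, \<alpha> w x}"
    proof
      fix y assume "y \<in> range (\<lambda>g. \<alpha> g x) \<inter> U"
      then obtain g where y: "y = \<alpha> g x" and "\<alpha> g x \<in> U"
        by auto
      then have "\<alpha> w (\<alpha> g x) = \<alpha> g x"
        using U by (auto simp: fixed_points_def)
      then have "g = (0, False) \<or> g = w"
        using reflection_fixed_along_orbit x m by simp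
      then show "y \<in> {x, \<alpha> w x}"
        using x y by auto
    qed
    then have "finite (range (\<lambda>g. \<alpha> g x) \<inter> U)"
      by (rule finite_subset) simp
    then show False
      using infinite_orbit_Int_open[OF x(1) U(1,2)] by simp
  qed
qed

definition free :: "'a \<Rightarrow> bool" where
  "free x \<longleftrightarrow> (\<forall>g. \<alpha> g x = x \<longrightarrow> g = (0, False))"

lemma free_act_eq:
  assumes "free x" "x \<in> topspace X" "\<alpha> p x = \<alpha> q x"
  shows "p = q"
proof -
  have "\<alpha> (dinf_inv q \<star> p) x = x"
    using assms by (simp add: act_mult)
  then have "dinf_inv q \<star> p = (0, False)"
    using assms(1) unfolding free_def by blast
  then show ?thesis
    by simp
qed

lemma free_act:
  assumes "x \<in> topspace X" "free x"
  shows "free (\<alpha> g x)"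
  unfolding free_def
proof (intro allI impI)
  fix h assume "\<alpha> h (\<alpha> g x) = \<alpha> g x"
  then have "\<alpha> (dinf_inv g \<star> h \<star> g) x = x"
    using assms by (simp add: act_mult)
  then show "h = (0, False)"
    using assms dinf_conj_eq_one unfolding free_def by blast
qed

lemma topspace_diff_free:
  "topspace X - {x \<in> topspace X. free x} = \<Union> (fixed_points ` (UNIV - {(0, False)}))"
  by (auto simp: free_def fixed_points_def)

lemma free_dense: "X closure_of {x \<in> topspace X. free x} = topspace X"
proof (rule Baire_dense_compact_Hausdorff[OF compact Hausdorff])
  show "\<And>T. T \<in> fixed_points ` (UNIV - {(0, False)}) \<Longrightarrow> closedin X T \<and> X interior_of T = {}"
    using closedin_fixed_points interior_fixed_points by blast
qed (simp_all add: topspace_diff_free)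

text \<open>If \<open>h x = \<alpha> (m x) x\<close> with \<open>m\<close> locally constant and \<open>h\<close> intertwines \<open>\<alpha>\<close> with \<open>\<alpha> \<circ> \<rho>\<close>,
  then \<open>m (\<alpha> g x) \<star> g = \<rho> g \<star> m x\<close> holds at free points by freeness and everywhere by
  continuity; two points with the same image then differ by some \<open>g\<close> with \<open>\<rho> g = 1\<close>.\<close>

lemma inj_on_orbit_map:
  assumes m: "continuous_map X (discrete_topology UNIV) m"
    and h: "\<And>x. x \<in> topspace X \<Longrightarrow> h x = \<alpha> (m x) x"
    and h_equivariant: "\<And>g x. x \<in> topspace X \<Longrightarrow> h (\<alpha> g x) = \<alpha> (\<rho> g) (h x)"
    and \<rho>: "\<And>g. \<rho> g = (0, False) \<Longrightarrow> g = (0, False)"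
  shows "inj_on h (topspace X)"
proof -
  have m_cocycle: "m (\<alpha> g x) \<star> g = \<rho> g \<star> m x" if x: "x \<in> topspace X" for g x
  proof (rule forall_in_closure_of_eq[of x X "{x \<in> topspace X. free x}" "discrete_topology UNIV"
        "\<lambda>x. m (\<alpha> g x) \<star> g" "\<lambda>x. \<rho> g \<star> m x"])
    show "x \<in> X closure_of {x \<in> topspace X. free x}"
      using free_dense x by simp
    show "continuous_map X (discrete_topology UNIV) (\<lambda>x. m (\<alpha> g x) \<star> g)"
      using continuous_map_compose[OF continuous_map_compose[OF continuous_act m],
          of "discrete_topology UNIV" "\<lambda>p. p \<star> g"] by (simp add: o_def)
    show "continuous_map X (discrete_topology UNIV) (\<lambda>x. \<rho> g \<star> m x)"
      using continuous_map_compose[OF m, of "discrete_topology UNIV" "\<lambda>p. \<rho> g \<star> p"]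
      by (simp add: o_def)
    fix z assume "z \<in> {x \<in> topspace X. free x}"
    then have z: "z \<in> topspace X" "free z"
      by auto
    have "\<alpha> (m (\<alpha> g z) \<star> g) z = h (\<alpha> g z)"
      using z h by (simp add: act_mult)
    also have "\<dots> = \<alpha> (\<rho> g \<star> m z) z"
      using z h h_equivariant by (simp add: act_mult)
    finally show "m (\<alpha> g z) \<star> g = \<rho> g \<star> m z"
      using free_act_eq[OF z(2,1)] by blast
  qed simp
  show ?thesis
  proof (rule inj_onI)
    fix x1 x2 assume x1: "x1 \<in> topspace X" and x2: "x2 \<in> topspace X" and "h x1 = h x2"
    define g where "g = dinf_inv (m x2) \<star> m x1"
    have "\<alpha> (m x1) x1 = \<alpha> (m x2) x2"
      using \<open>h x1 = h x2\<close> h x1 x2 by simp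
    then have x2_eq: "x2 = \<alpha> g x1"
      using x1 x2 by (metis act_inv_act act_mult g_def)
    have "\<rho> g \<star> m x1 = m x2 \<star> g"
      using m_cocycle[OF x1, of g] x2_eq by simp
    also have "\<dots> = (0, False) \<star> m x1"
      by (simp add: g_def dinf_mult_assoc[symmetric])
    finally have "g = (0, False)"
      using \<rho> by (simp only: dinf_mult_right_cancel)
    then show "x1 = x2"
      using x2_eq x1 by simp
  qed
qed

end

section \<open>Continuously orbit equivalent minimal actions\<close>

locale dinf_orbit_equiv = A: dinf_minimal_action X \<alpha> + B: dinf_minimal_action X \<beta>
  for X :: "'a topology" and \<alpha> \<beta> :: "int \<times> bool \<Rightarrow> 'a \<Rightarrow> 'a" +
  fixes \<phi> \<psi> :: "'a \<Rightarrow> 'a" and a b :: "int \<times> bool \<Rightarrow> 'a \<Rightarrow> int \<times> bool"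
  assumes homeo: "homeomorphic_maps X X \<phi> \<psi>"
    and continuous_a:
      "continuous_map (prod_topology (discrete_topology UNIV) X) (discrete_topology UNIV) (\<lambda>(g, x). a g x)"
    and continuous_b:
      "continuous_map (prod_topology (discrete_topology UNIV) X) (discrete_topology UNIV) (\<lambda>(h, y). b h y)"
    and orbit_a: "\<And>g x. x \<in> topspace X \<Longrightarrow> \<phi> (\<alpha> g x) = \<beta> (a g x) (\<phi> x)"
    and orbit_b: "\<And>h y. y \<in> topspace X \<Longrightarrow> \<psi> (\<beta> h y) = \<alpha> (b h y) (\<psi> y)"
begin

lemma orbit_equiv_swap: "dinf_orbit_equiv X \<beta> \<alpha> \<psi> \<phi> b a"
proof (rule dinf_orbit_equiv.intro)
  show "dinf_orbit_equiv_axioms X \<beta> \<alpha> \<psi> \<phi> b a"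
    using homeomorphic_maps_sym[of X X \<phi> \<psi>] homeo continuous_a continuous_b orbit_a orbit_b
    by unfold_locales auto
qed (fact B.dinf_minimal_action_axioms A.dinf_minimal_action_axioms)+

lemma continuous_phi: "continuous_map X X \<phi>"
  using homeo by (simp add: homeomorphic_maps_def)

lemma phi_in_topspace [simp]: "x \<in> topspace X \<Longrightarrow> \<phi> x \<in> topspace X"
  using continuous_phi by (simp add: continuous_map_def Pi_iff)

lemma psi_phi [simp]: "x \<in> topspace X \<Longrightarrow> \<psi> (\<phi> x) = x"
  using homeo by (simp add: homeomorphic_maps_def)

lemma phi_psi [simp]: "x \<in> topspace X \<Longrightarrow> \<phi> (\<psi> x) = x"
  using homeo by (simp add: homeomorphic_maps_def)

lemma continuous_a_at: "continuous_map X (discrete_topology UNIV) (a g)"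
  using continuous_map_compose[OF continuous_map_pairedI[OF continuous_map_const[THEN iffD2]
        continuous_map_id] continuous_a]
  by (simp add: o_def)

lemma continuous_b_at: "continuous_map X (discrete_topology UNIV) (b h)"
  using continuous_map_compose[OF continuous_map_pairedI[OF continuous_map_const[THEN iffD2]
        continuous_map_id] continuous_b]
  by (simp add: o_def)

lemma continuous_b_orbit_shift:
  assumes "continuous_map X (discrete_topology UNIV) C"
  shows "continuous_map X (discrete_topology UNIV) (\<lambda>x. b (C x) (\<phi> x))"
  using continuous_map_compose[OF continuous_map_pairedI[OF assms continuous_phi] continuous_b]
  by (simp add: o_def)

lemma continuous_orbit_shift:
  assumes C: "continuous_map X (discrete_topology UNIV) C"
  shows "continuous_map X X (\<lambda>x. \<beta> (C x) (\<phi> x))"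
proof (rule continuous_map_locally_eq)
  fix y assume y: "y \<in> topspace X"
  have "openin X {x \<in> topspace X. C x \<in> {C y}}"
    by (rule openin_continuous_map_preimage[OF C]) simp
  moreover have "continuous_map X X (\<beta> (C y) \<circ> \<phi>)"
    by (rule continuous_map_compose[OF continuous_phi B.continuous_act])
  ultimately show "\<exists>T g. openin X T \<and> y \<in> T \<and> continuous_map X X g \<and> (\<forall>z\<in>T. \<beta> (C z) (\<phi> z) = g z)"
    using y by (intro exI[of _ "{x \<in> topspace X. C x \<in> {C y}}"] exI[of _ "\<beta> (C y) \<circ> \<phi>"]) auto
qed

definition free_pts :: "'a set" where
  "free_pts = {x \<in> topspace X. A.free x \<and> B.free (\<phi> x)}"

lemma free_pts_act: "x \<in> free_pts \<Longrightarrow> \<alpha> g x \<in> free_pts"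
  unfolding free_pts_def using A.free_act B.free_act orbit_a by auto

lemma a_cocycle:
  assumes x: "x \<in> topspace X" and free: "B.free (\<phi> x)"
  shows "a (g' \<star> g) x = a g' (\<alpha> g x) \<star> a g x"
proof (rule B.free_act_eq[OF free phi_in_topspace[OF x]])
  have "\<beta> (a (g' \<star> g) x) (\<phi> x) = \<phi> (\<alpha> (g' \<star> g) x)"
    using orbit_a x by simp
  also have "\<dots> = \<phi> (\<alpha> g' (\<alpha> g x))"
    using x by (simp add: A.act_mult)
  also have "\<dots> = \<beta> (a g' (\<alpha> g x) \<star> a g x) (\<phi> x)"
    using orbit_a x by (simp add: B.act_mult)
  finally show "\<beta> (a (g' \<star> g) x) (\<phi> x) = \<beta> (a g' (\<alpha> g x) \<star> a g x) (\<phi> x)" .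
qed

lemma b_a_inverse:
  assumes "x \<in> free_pts"
  shows "b (a g x) (\<phi> x) = g"
proof -
  have x: "x \<in> topspace X" "A.free x"
    using assms by (auto simp: free_pts_def)
  have "\<alpha> (b (a g x) (\<phi> x)) x = \<psi> (\<beta> (a g x) (\<phi> x))"
    using orbit_b[of "\<phi> x"] x by simp
  also have "\<dots> = \<alpha> g x"
    using orbit_a[of x g, symmetric] x by simp
  finally show ?thesis
    by (rule A.free_act_eq[OF x(2,1)])
qed

lemma a_b_inverse:
  assumes "x \<in> free_pts"
  shows "a (b p (\<phi> x)) x = p"
proof -
  have x: "x \<in> topspace X" "B.free (\<phi> x)"
    using assms by (auto simp: free_pts_def)
  have "\<beta> (a (b p (\<phi> x)) x) (\<phi> x) = \<phi> (\<psi> (\<beta> p (\<phi> x)))"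
    using orbit_a orbit_b[of "\<phi> x"] x by simp
  also have "\<dots> = \<beta> p (\<phi> x)"
    using x by simp
  finally show ?thesis
    by (rule B.free_act_eq[OF x(2) phi_in_topspace[OF x(1)]])
qed

lemma topspace_diff_free_pts:
  "topspace X - free_pts \<subseteq>
     \<Union> (A.fixed_points ` (UNIV - {(0, False)})) \<union> \<Union> ((\<lambda>w. \<psi> ` B.fixed_points w) ` (UNIV - {(0, False)}))"
proof
  fix x assume x: "x \<in> topspace X - free_pts"
  then consider "x \<in> topspace X - {x \<in> topspace X. A.free x}" | "\<phi> x \<in> topspace X - {y \<in> topspace X. B.free y}"
    by (auto simp: free_pts_def)
  then show "x \<in> \<Union> (A.fixed_points ` (UNIV - {(0, False)})) \<union> \<Union> ((\<lambda>w. \<psi> ` B.fixed_points w) ` (UNIV - {(0, False)}))"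
  proof cases
    case 1
    then show ?thesis
      unfolding A.topspace_diff_free by blast
  next
    case 2
    then obtain w where "w \<in> UNIV - {(0, False)}" "\<phi> x \<in> B.fixed_points w"
      unfolding B.topspace_diff_free by blast
    moreover have "x = \<psi> (\<phi> x)"
      using x by simp
    ultimately have "w \<in> UNIV - {(0, False)}" "x \<in> \<psi> ` B.fixed_points w"
      by (metis image_eqI)+
    then show ?thesis
      by blast
  qed
qed

lemma free_pts_dense: "X closure_of free_pts = topspace X"
proof (rule Baire_dense_compact_Hausdorff[OF A.compact A.Hausdorff _ _ topspace_diff_free_pts[folded Union_Un_distrib]])
  have \<psi>: "homeomorphic_map X X \<psi>"
    using homeo homeomorphic_maps_imp_map homeomorphic_maps_sym by blast
  have "closedin X (\<psi> ` B.fixed_points w) \<and> X interior_of (\<psi> ` B.fixed_points w) = {}"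
    if "w \<noteq> (0, False)" for w
    using that B.closedin_fixed_points B.interior_fixed_points homeomorphic_imp_closed_map[OF \<psi>]
      homeomorphic_map_interior_of[OF \<psi> closedin_subset[OF B.closedin_fixed_points]]
    by (auto simp: closed_map_def)
  then show "closedin X T \<and> X interior_of T = {}"
    if "T \<in> A.fixed_points ` (UNIV - {(0, False)}) \<union> (\<lambda>w. \<psi> ` B.fixed_points w) ` (UNIV - {(0, False)})" for T
    using that A.closedin_fixed_points A.interior_fixed_points by blast
qed simp

definition step_bound :: int where
  "step_bound = Max (insert 0 ((\<lambda>e. \<bar>fst e\<bar>) ` (a (1, False) ` topspace X \<union> a (0, True) ` topspace X)))"

definition band_bound :: int where
  "band_bound = Max (insert 0 ((\<lambda>q. \<bar>dinf_height q\<bar>) `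
     (\<Union>p \<in> {p. 0 \<le> dinf_height p \<and> dinf_height p < step_bound}. b p ` topspace X)))"

lemma step_bound:
  assumes "u \<in> {(1, False), (0, True)}" "x \<in> topspace X"
  shows "\<bar>fst (a u x)\<bar> \<le> step_bound"
  unfolding step_bound_def using assms
  by (intro Max_ge) (auto intro: finite_image_compact_discrete[OF A.compact continuous_a_at])

lemma band_bound:
  assumes "0 \<le> dinf_height p" "dinf_height p < step_bound" "y \<in> topspace X"
  shows "\<bar>dinf_height (b p y)\<bar> \<le> band_bound"
proof -
  have "finite {p. 0 \<le> dinf_height p \<and> dinf_height p < step_bound}"
    by (rule finite_subset[OF _ finite_dinf_height_less[of step_bound]]) auto
  then show ?thesis
    unfolding band_bound_def using assms
    by (intro Max_ge) (auto intro: finite_image_compact_discrete[OF A.compact continuous_b_at])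
qed

lemma coarse_bijection_at:
  assumes x: "x \<in> free_pts"
  shows "dinf_coarse_bijection (\<lambda>g. a g x) (\<lambda>p. b p (\<phi> x)) step_bound band_bound"
proof
  have x': "x \<in> topspace X" "B.free (\<phi> x)"
    using x by (auto simp: free_pts_def)
  show "b (a g x) (\<phi> x) = g" "a (b p (\<phi> x)) x = p" for g p
    using b_a_inverse[OF x] a_b_inverse[OF x] by auto
  show "\<bar>dinf_height (a (u \<star> g) x) - dinf_height (a g x)\<bar> \<le> step_bound"
    if "u \<in> {(1, False), (0, True)}" for g u
    using a_cocycle[OF x'] dinf_height_mult_left step_bound[OF that] x' by simp
  show "\<bar>dinf_height (b p (\<phi> x))\<bar> \<le> band_bound"
    if "0 \<le> dinf_height p" "dinf_height p < step_bound" for p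
    using band_bound[OF that] x' by simp
qed

definition cut_at :: "'a \<Rightarrow> (int \<times> bool) set" where
  "cut_at x = (\<lambda>g. a g x) -` dinf_upper 0"

lemma equiv_half_space_cut_at_act:
  assumes x: "x \<in> free_pts" and K: "equiv_half_space j (cut_at x) c"
  shows "equiv_half_space j (cut_at (\<alpha> g x)) (dinf_shift j g \<star> c \<star> dinf_inv (a g x))"
proof -
  interpret P: dinf_coarse_bijection "\<lambda>g. a g x" "\<lambda>p. b p (\<phi> x)" step_bound band_bound
    by (rule coarse_bijection_at[OF x])
  have "a h (\<alpha> g x) = a (h \<star> g) x \<star> dinf_inv (a g x)" for h
    using a_cocycle[of x h g] x by (simp add: free_pts_def dinf_mult_assoc)
  then have "cut_at (\<alpha> g x) = (\<lambda>h. a (h \<star> g) x \<star> dinf_inv (a g x)) -` dinf_upper 0"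
    by (simp add: cut_at_def)
  then show ?thesis
    using equiv_half_space_transfer[OF P.bij_P] K by (simp add: cut_at_def)
qed

definition window :: "(int \<times> bool) set" where
  "window = {g. \<bar>dinf_height g\<bar> < band_bound + 2} \<union> {(band_bound + 2, False)}"

definition window_nbhd :: "'a \<Rightarrow> 'a set" where
  "window_nbhd y = {x \<in> topspace X. \<forall>g\<in>window. a g x = a g y}"

lemma openin_window_nbhd: "openin X (window_nbhd y)"
proof -
  have "window_nbhd y = \<Inter> ((\<lambda>g. {x \<in> topspace X. a g x \<in> {a g y}}) ` window)"
    by (auto simp: window_nbhd_def window_def)
  moreover have "openin X (\<Inter> ((\<lambda>g. {x \<in> topspace X. a g x \<in> {a g y}}) ` window))"
  proof (rule openin_Inter)
    show "finite ((\<lambda>g. {x \<in> topspace X. a g x \<in> {a g y}}) ` window)"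
      by (simp add: window_def finite_dinf_height_less)
    show "(\<lambda>g. {x \<in> topspace X. a g x \<in> {a g y}}) ` window \<noteq> {}"
      by (simp add: window_def)
    show "openin X S" if "S \<in> (\<lambda>g. {x \<in> topspace X. a g x \<in> {a g y}}) ` window" for S
      using that openin_continuous_map_preimage[OF continuous_a_at, of "{a _ y}"] by auto
  qed
  ultimately show ?thesis
    by simp
qed

lemma window_nbhd_self: "y \<in> topspace X \<Longrightarrow> y \<in> window_nbhd y"
  by (simp add: window_nbhd_def)

lemma window_nbhd_eq: "z \<in> window_nbhd y \<Longrightarrow> window_nbhd z = window_nbhd y"
  by (auto simp: window_nbhd_def)

lemma cut_at_window_nbhd:
  assumes "x \<in> free_pts" "x' \<in> free_pts" "x' \<in> window_nbhd x"
  shows "cut_at x' = cut_at x"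
  unfolding cut_at_def
  using assms(3)
  by (intro dinf_coarse_bijection_upper_preimage_eq[OF coarse_bijection_at[OF assms(2)]
        coarse_bijection_at[OF assms(1)]]) (auto simp: window_nbhd_def window_def)

text \<open>By minimality every free orbit passes through the window neighbourhood of a fixed free
  point, where the cut is the same; so a single \<open>j\<close> works at all free points.\<close>

lemma twist_exists: "\<exists>j\<in>{0, 1}. \<forall>x\<in>free_pts. \<exists>c. equiv_half_space j (cut_at x) c"
proof -
  obtain x0 where x0: "x0 \<in> free_pts"
    using free_pts_dense A.infinite by fastforce
  then have x0_top: "x0 \<in> topspace X"
    by (simp add: free_pts_def)
  interpret P: dinf_coarse_bijection "\<lambda>g. a g x0" "\<lambda>p. b p (\<phi> x0)" step_bound band_bound
    by (rule coarse_bijection_at[OF x0])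
  obtain j c0 where j: "j \<in> {0, 1}" and c0: "equiv_half_space j (cut_at x0) c0"
    using equiv_half_space_exists[OF P.upper_preimage_commensurable]
    by (auto simp: P.upper_preimage_def cut_at_def)
  have "\<exists>c. equiv_half_space j (cut_at x) c" if x: "x \<in> free_pts" for x
  proof -
    have "x \<in> topspace X"
      using x by (simp add: free_pts_def)
    then obtain g where g: "\<alpha> g x \<in> window_nbhd x0"
      using A.orbit_meets_open[OF _ openin_window_nbhd, of x x0] window_nbhd_self[OF x0_top]
      by blast
    then have "equiv_half_space j (cut_at (\<alpha> g x)) c0"
      using cut_at_window_nbhd[OF x0 free_pts_act[OF x]] c0 by simp
    then have "equiv_half_space j (cut_at (\<alpha> (dinf_inv g) (\<alpha> g x)))
        (dinf_shift j (dinf_inv g) \<star> c0 \<star> dinf_inv (a (dinf_inv g) (\<alpha> g x)))"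
      by (rule equiv_half_space_cut_at_act[OF free_pts_act[OF x]])
    then show ?thesis
      using \<open>x \<in> topspace X\<close> by (metis A.act_inv_act)
  qed
  then show ?thesis
    using j by blast
qed

definition twist :: int where
  "twist = (SOME j. j \<in> {0, 1} \<and> (\<forall>x\<in>free_pts. \<exists>c. equiv_half_space j (cut_at x) c))"

lemma twist_equiv_half_space: "x \<in> free_pts \<Longrightarrow> \<exists>c. equiv_half_space twist (cut_at x) c"
  using someI_ex[OF twist_exists[unfolded Bex_def]] unfolding twist_def[symmetric] by auto

definition label :: "'a \<Rightarrow> int \<times> bool" where
  "label x = (THE c. equiv_half_space twist (cut_at x) c)"

lemma label_eq: "equiv_half_space twist (cut_at x) c \<Longrightarrow> label x = c"
  unfolding label_def by (blast intro: the_equality equiv_half_space_unique)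

lemma equiv_half_space_label: "x \<in> free_pts \<Longrightarrow> equiv_half_space twist (cut_at x) (label x)"
  using twist_equiv_half_space label_eq by blast

lemma label_act:
  "x \<in> free_pts \<Longrightarrow> label (\<alpha> g x) = dinf_shift twist g \<star> label x \<star> dinf_inv (a g x)"
  by (rule label_eq[OF equiv_half_space_cut_at_act[OF _ equiv_half_space_label]])

definition label_ext :: "'a \<Rightarrow> int \<times> bool" where
  "label_ext y = label (SOME x. x \<in> free_pts \<inter> window_nbhd y)"

lemma label_ext_free:
  assumes x: "x \<in> free_pts"
  shows "label_ext x = label x"
proof -
  have "\<exists>x'. x' \<in> free_pts \<inter> window_nbhd x"
    using x window_nbhd_self by (auto simp: free_pts_def)
  then have "(SOME x'. x' \<in> free_pts \<inter> window_nbhd x) \<in> free_pts \<inter> window_nbhd x"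
    by (rule someI_ex)
  then show ?thesis
    unfolding label_ext_def label_def using cut_at_window_nbhd x by force
qed

lemma continuous_label_ext: "continuous_map X (discrete_topology UNIV) label_ext"
proof (rule continuous_map_locally_eq)
  fix y assume "y \<in> topspace X"
  then show "\<exists>T g. openin X T \<and> y \<in> T \<and> continuous_map X (discrete_topology UNIV) g \<and>
      (\<forall>z\<in>T. label_ext z = g z)"
    by (intro exI[of _ "window_nbhd y"] exI[of _ "\<lambda>_. label_ext y"])
      (auto simp: openin_window_nbhd window_nbhd_self label_ext_def window_nbhd_eq)
qed

lemma label_ext_equivariant:
  assumes x: "x \<in> topspace X"
  shows "\<beta> (label_ext (\<alpha> g x)) (\<phi> (\<alpha> g x)) = \<beta> (dinf_shift twist g) (\<beta> (label_ext x) (\<phi> x))"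
proof -
  let ?f = "\<lambda>x. \<beta> (label_ext x) (\<phi> x)"
  have "(?f \<circ> \<alpha> g) x = (\<beta> (dinf_shift twist g) \<circ> ?f) x"
  proof (rule forall_in_closure_of_eq[of x X free_pts X "?f \<circ> \<alpha> g" "\<beta> (dinf_shift twist g) \<circ> ?f"])
    show "x \<in> X closure_of free_pts"
      using free_pts_dense x by simp
    show "Hausdorff_space X"
      by (rule A.Hausdorff)
    show "continuous_map X X (?f \<circ> \<alpha> g)"
      by (rule continuous_map_compose[OF A.continuous_act continuous_orbit_shift[OF continuous_label_ext]])
    show "continuous_map X X (\<beta> (dinf_shift twist g) \<circ> ?f)"
      by (rule continuous_map_compose[OF continuous_orbit_shift[OF continuous_label_ext] B.continuous_act])
    fix z assume z: "z \<in> free_pts"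
    then have z_top: "z \<in> topspace X"
      by (simp add: free_pts_def)
    have "?f (\<alpha> g z) = \<beta> (label (\<alpha> g z) \<star> a g z) (\<phi> z)"
      using z_top orbit_a label_ext_free[OF free_pts_act[OF z]] by (simp add: B.act_mult)
    also have "\<dots> = \<beta> (dinf_shift twist g) (?f z)"
      using z z_top label_act[OF z] label_ext_free[OF z] by (simp add: B.act_mult dinf_mult_assoc)
    finally show "(?f \<circ> \<alpha> g) z = (\<beta> (dinf_shift twist g) \<circ> ?f) z"
      by simp
  qed
  then show ?thesis
    by simp
qed

lemma twisted_conjugacy_exists:
  "\<exists>C j. continuous_map X (discrete_topology UNIV) C \<and>
     (\<forall>g. \<forall>x\<in>topspace X. \<beta> (C (\<alpha> g x)) (\<phi> (\<alpha> g x)) = \<beta> (dinf_shift j g) (\<beta> (C x) (\<phi> x)))"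
  using continuous_label_ext label_ext_equivariant by blast

text \<open>Composing with the map obtained in the same way from \<open>\<psi>\<close> gives a map
  \<open>x \<mapsto> \<alpha> (m x) x\<close> with locally constant \<open>m\<close>, to which \<open>inj_on_orbit_map\<close> applies.\<close>

lemma inj_on_twisted_conjugacy:
  assumes C: "continuous_map X (discrete_topology UNIV) C"
    and equivariant: "\<And>g x. x \<in> topspace X \<Longrightarrow>
      \<beta> (C (\<alpha> g x)) (\<phi> (\<alpha> g x)) = \<beta> (dinf_shift j g) (\<beta> (C x) (\<phi> x))"
  shows "inj_on (\<lambda>x. \<beta> (C x) (\<phi> x)) (topspace X)"
proof -
  interpret S: dinf_orbit_equiv X \<beta> \<alpha> \<psi> \<phi> b a
    by (rule orbit_equiv_swap)
  obtain C' j' where C': "continuous_map X (discrete_topology UNIV) C'"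
    and equivariant': "\<And>g y. y \<in> topspace X \<Longrightarrow>
      \<alpha> (C' (\<beta> g y)) (\<psi> (\<beta> g y)) = \<alpha> (dinf_shift j' g) (\<alpha> (C' y) (\<psi> y))"
    using S.twisted_conjugacy_exists by blast
  define f where "f x = \<beta> (C x) (\<phi> x)" for x
  define f' where "f' y = \<alpha> (C' y) (\<psi> y)" for y
  define m where "m x = C' (f x) \<star> b (C x) (\<phi> x)" for x
  have f_top: "f x \<in> topspace X" if "x \<in> topspace X" for x
    using that by (simp add: f_def)
  have "continuous_map X (discrete_topology UNIV) (C' \<circ> f)"
    using continuous_map_compose[OF continuous_orbit_shift[OF C] C'] by (simp add: f_def[abs_def])
  then have m: "continuous_map X (discrete_topology UNIV) m"
    using continuous_map_discrete_combine[OF _ continuous_b_orbit_shift[OF C], of "C' \<circ> f"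
        "\<lambda>p q. p \<star> q"]
    by (simp add: m_def[abs_def] o_def)
  have "f' (f x) = \<alpha> (m x) x" if x: "x \<in> topspace X" for x
    using x orbit_b[of "\<phi> x" "C x"] by (simp add: f_def f'_def m_def A.act_mult)
  moreover have "f' (f (\<alpha> g x)) = \<alpha> (dinf_shift j' (dinf_shift j g)) (f' (f x))"
    if "x \<in> topspace X" for g x
    using that equivariant equivariant' f_top by (simp add: f_def f'_def)
  ultimately have "inj_on (f' \<circ> f) (topspace X)"
    using A.inj_on_orbit_map[OF m, of "f' \<circ> f" "\<lambda>g. dinf_shift j' (dinf_shift j g)"]
    by (simp add: dinf_shift_eq_one_iff)
  then show ?thesis
    unfolding f_def[abs_def] by (rule inj_on_imageI2)
qed

lemma conjugate_actions_Dinf: "conjugate_actions Dinf X \<alpha> \<beta>"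
proof -
  obtain C j where C: "continuous_map X (discrete_topology UNIV) C"
    and equivariant: "\<And>g x. x \<in> topspace X \<Longrightarrow>
      \<beta> (C (\<alpha> g x)) (\<phi> (\<alpha> g x)) = \<beta> (dinf_shift j g) (\<beta> (C x) (\<phi> x))"
    using twisted_conjugacy_exists by blast
  define f where "f x = \<beta> (C x) (\<phi> x)" for x
  have f: "continuous_map X X f"
    using continuous_orbit_shift[OF C] by (simp add: f_def[abs_def])
  obtain x0 where x0: "x0 \<in> topspace X"
    using A.infinite by fastforce
  have "f ` topspace X = topspace X"
  proof (rule B.closedin_orbit_superset)
    show "closedin X (f ` topspace X)"
      using compactin_imp_closedin[OF B.Hausdorff image_compactin[OF _ f]] A.compact
      by (simp add: compact_space_def)
    show "f x0 \<in> topspace X"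
      using x0 by (simp add: f_def)
    show "range (\<lambda>h. \<beta> h (f x0)) \<subseteq> f ` topspace X"
    proof
      fix y assume "y \<in> range (\<lambda>h. \<beta> h (f x0))"
      then obtain h where "y = \<beta> h (f x0)"
        by blast
      moreover have "\<beta> h (f x0) = f (\<alpha> (dinf_shift (- j) h) x0)"
        using equivariant[OF x0, of "dinf_shift (- j) h"] by (simp add: f_def dinf_shift_inverse)
      ultimately show "y \<in> f ` topspace X"
        using x0 by simp
    qed
  qed
  moreover have "inj_on f (topspace X)"
    using inj_on_twisted_conjugacy[OF C equivariant] by (simp add: f_def[abs_def])
  ultimately have "homeomorphic_map X X f"
    using continuous_imp_homeomorphic_map[OF f A.compact B.Hausdorff] by blast
  then show ?thesis
    unfolding conjugate_actions_def
    by (intro exI[of _ f] exI[of _ "dinf_shift j"] conjI dinf_shift_iso ballI)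
      (simp_all add: f_def equivariant)
qed

end

theorem theorem1p2:
  fixes X :: "'a topology" and \<alpha> \<beta> :: "int \<times> bool \<Rightarrow> 'a \<Rightarrow> 'a"
  assumes "compact_space X" and "Hausdorff_space X" and "infinite (topspace X)"
    and "cont_action Dinf X \<alpha>" and "cont_action Dinf X \<beta>"
    and "minimal_action Dinf X \<alpha>" and "minimal_action Dinf X \<beta>"
    and "cont_orbit_equiv Dinf X \<alpha> Dinf X \<beta>"
  shows "conjugate_actions Dinf X \<alpha> \<beta>"
proof -
  from assms(8) obtain \<phi> \<psi> a b where "homeomorphic_maps X X \<phi> \<psi>"
    "continuous_map (prod_topology (discrete_topology UNIV) X) (discrete_topology UNIV) (\<lambda>(g, x). a g x)"
    "continuous_map (prod_topology (discrete_topology UNIV) X) (discrete_topology UNIV) (\<lambda>(h, y). b h y)"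
    "\<And>g x. x \<in> topspace X \<Longrightarrow> \<phi> (\<alpha> g x) = \<beta> (a g x) (\<phi> x)"
    "\<And>h y. y \<in> topspace X \<Longrightarrow> \<psi> (\<beta> h y) = \<alpha> (b h y) (\<psi> y)"
    unfolding cont_orbit_equiv_def Dinf_simps ball_UNIV by blast
  then interpret dinf_orbit_equiv X \<alpha> \<beta> \<phi> \<psi> a b
    using assms by (intro dinf_orbit_equiv.intro dinf_minimal_action.intro dinf_orbit_equiv_axioms.intro)
  show ?thesis
    by (rule conjugate_actions_Dinf)
qed

end
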